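(* Let $M$ be a $po$-$\Gamma$-semigroup. If $M$ is completely regular, then $B=(B\Gamma B]$ for every bi-ideal $B$ of $M$. Conversely, if $B=(B\Gamma B]$ for every bi-ideal $B$ of $M$, then $M$ is regular.
   Context: A $po$-$\Gamma$-semigroup is a triple $(M,\Gamma,\le)$ where $M,\Gamma$ are nonempty sets with a map $M\times\Gamma\times M\to M$, $(a,\gamma,b)\mapsto a\gamma b$, satisfying $(a\gamma b)\mu c=a\gamma(b\mu c)$ for all $a,b,c\in M$, $\gamma,\mu\in\Gamma$, and $\le$ is a partial order on $M$ such that $a\le b$ implies $a\gamma c\le b\gamma c$ and $c\gamma a\le c\gamma b$ for all $c\in M$, $\gamma\in\Gamma$. For $A,B\subseteq M$, $A\Gamma B=\{a\gamma b: a\in A,\gamma\in\Gamma,b\in B\}$ (with $a\Gamma B$ meaning $\{a\}\Gamma B$, etc.), and $(A]=\{t\in M: t\le a \text{ for some } a\in A\}$. $M$ is regular if $a\in(a\Gamma M\Gamma a]$ for all $a\in M$; left regular if $a\in(M\Gamma a\Gamma a]$ for all $a\in M$; right regular if $a\in(a\Gamma a\Gamma M]$ for all $a\in M$; completely regular if it is regular, left regular and right regular. A bi-ideal of $M$ is a nonempty subset $B\subseteq M$ such that $B\Gamma M\Gamma B\subseteq B$ and, whenever $a\in B$, $b\in M$ and $b\le a$, then $b\in B$. *)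

theory Defs
  imports Main
begin

definition po_gamma_semigroup ::
  "'m set \<Rightarrow> 'g set \<Rightarrow> ('m \<Rightarrow> 'g \<Rightarrow> 'm \<Rightarrow> 'm) \<Rightarrow> ('m \<Rightarrow> 'm \<Rightarrow> bool) \<Rightarrow> bool" where
  "po_gamma_semigroup M G op le \<longleftrightarrow>
     M \<noteq> {} \<and> G \<noteq> {} \<and>
     (\<forall>a\<in>M. \<forall>g\<in>G. \<forall>b\<in>M. op a g b \<in> M) \<and>
     (\<forall>a\<in>M. \<forall>b\<in>M. \<forall>c\<in>M. \<forall>g\<in>G. \<forall>m\<in>G. op (op a g b) m c = op a g (op b m c)) \<and>
     (\<forall>a\<in>M. le a a) \<and>
     (\<forall>a\<in>M. \<forall>b\<in>M. le a b \<and> le b a \<longrightarrow> a = b) \<and>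
     (\<forall>a\<in>M. \<forall>b\<in>M. \<forall>c\<in>M. le a b \<and> le b c \<longrightarrow> le a c) \<and>
     (\<forall>a\<in>M. \<forall>b\<in>M. le a b \<longrightarrow> (\<forall>c\<in>M. \<forall>g\<in>G. le (op a g c) (op b g c) \<and> le (op c g a) (op c g b)))"

definition gprod :: "('m \<Rightarrow> 'g \<Rightarrow> 'm \<Rightarrow> 'm) \<Rightarrow> 'm set \<Rightarrow> 'g set \<Rightarrow> 'm set \<Rightarrow> 'm set" where
  "gprod op A G B = {op a g b | a g b. a \<in> A \<and> g \<in> G \<and> b \<in> B}"

definition down :: "'m set \<Rightarrow> ('m \<Rightarrow> 'm \<Rightarrow> bool) \<Rightarrow> 'm set \<Rightarrow> 'm set" where
  "down M le A = {t \<in> M. \<exists>a\<in>A. le t a}"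

definition regular_pogs where
  "regular_pogs M G op le \<longleftrightarrow>
     (\<forall>a\<in>M. a \<in> down M le (gprod op (gprod op {a} G M) G {a}))"

definition left_regular_pogs where
  "left_regular_pogs M G op le \<longleftrightarrow>
     (\<forall>a\<in>M. a \<in> down M le (gprod op (gprod op M G {a}) G {a}))"

definition right_regular_pogs where
  "right_regular_pogs M G op le \<longleftrightarrow>
     (\<forall>a\<in>M. a \<in> down M le (gprod op (gprod op {a} G {a}) G M))"

definition completely_regular_pogs where
  "completely_regular_pogs M G op le \<longleftrightarrow>
     regular_pogs M G op le \<and> left_regular_pogs M G op le \<and> right_regular_pogs M G op le"

definition bi_ideal where
  "bi_ideal M G op le B \<longleftrightarrow>
     B \<subseteq> M \<and> B \<noteq> {} \<and>
     gprod op (gprod op B G M) G B \<subseteq> B \<and>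
     (\<forall>a\<in>B. \<forall>b\<in>M. le b a \<longrightarrow> b \<in> B)"

end

theory Submission
  imports Defs
begin

text \<open>
  If \<open>M\<close> is right regular, a bi-ideal \<open>B\<close> is closed under \<open>\<Gamma>\<close>: from \<open>b \<le> b\<alpha>b\<beta>x\<close> we get
  \<open>b\<gamma>c \<le> b\<alpha>(b\<beta>x)\<gamma>c \<in> B\<Gamma>M\<Gamma>B \<subseteq> B\<close>, so \<open>(B\<Gamma>B] \<subseteq> B\<close>. Regularity and left regularity
  give \<open>b \<le> b\<alpha>x\<beta>b \<le> b\<alpha>x\<beta>(y\<epsilon>b\<mu>b) = (b\<alpha>(x\<beta>y)\<epsilon>b)\<mu>b \<in> B\<Gamma>B\<close>, so \<open>B \<subseteq> (B\<Gamma>B]\<close>.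

  Conversely, apply the hypothesis to the bi-ideal \<open>B = ({a} \<union> a\<Gamma>M\<Gamma>a]\<close> generated by \<open>a\<close>:
  using \<open>B = (B\<Gamma>B]\<close> twice, \<open>a \<in> B \<subseteq> (B\<Gamma>B\<Gamma>B\<Gamma>B] \<subseteq> (B\<Gamma>M\<Gamma>B] \<subseteq> (a\<Gamma>M\<Gamma>a]\<close>.
\<close>

lemma gprod_mono: "A \<subseteq> A' \<Longrightarrow> B \<subseteq> B' \<Longrightarrow> gprod op A G B \<subseteq> gprod op A' G B'"
  unfolding gprod_def by blast

lemma gprod_Un_left: "gprod op (A \<union> A') G B = gprod op A G B \<union> gprod op A' G B"
  unfolding gprod_def by blast

lemma gprod_Un_right: "gprod op A G (B \<union> B') = gprod op A G B \<union> gprod op A G B'"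
  unfolding gprod_def by blast

lemma down_mono: "A \<subseteq> B \<Longrightarrow> down M le A \<subseteq> down M le B"
  unfolding down_def by blast

locale preordered_gamma_semigroup =
  fixes M :: "'m set" and G :: "'g set" and op :: "'m \<Rightarrow> 'g \<Rightarrow> 'm \<Rightarrow> 'm"
    and le :: "'m \<Rightarrow> 'm \<Rightarrow> bool"
  assumes op_closed [simp]: "\<lbrakk>a \<in> M; \<gamma> \<in> G; b \<in> M\<rbrakk> \<Longrightarrow> op a \<gamma> b \<in> M"
    and op_assoc:
      "\<lbrakk>a \<in> M; b \<in> M; c \<in> M; \<gamma> \<in> G; \<mu> \<in> G\<rbrakk> \<Longrightarrow> op (op a \<gamma> b) \<mu> c = op a \<gamma> (op b \<mu> c)"
    and refl_le: "a \<in> M \<Longrightarrow> le a a"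
    and trans_le: "\<lbrakk>a \<in> M; b \<in> M; c \<in> M; le a b; le b c\<rbrakk> \<Longrightarrow> le a c"
    and op_mono_left: "\<lbrakk>a \<in> M; b \<in> M; c \<in> M; \<gamma> \<in> G; le a b\<rbrakk> \<Longrightarrow> le (op a \<gamma> c) (op b \<gamma> c)"
    and op_mono_right: "\<lbrakk>a \<in> M; b \<in> M; c \<in> M; \<gamma> \<in> G; le a b\<rbrakk> \<Longrightarrow> le (op c \<gamma> a) (op c \<gamma> b)"

lemma preordered_gamma_semigroup_if_po_gamma_semigroup:
  assumes "po_gamma_semigroup M G op le"
  shows "preordered_gamma_semigroup M G op le"
proof -
  note ax = assms[unfolded po_gamma_semigroup_def]
  have closed: "\<forall>a\<in>M. \<forall>\<gamma>\<in>G. \<forall>b\<in>M. op a \<gamma> b \<in> M"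
    using ax by (elim conjE) assumption
  have assoc: "\<forall>a\<in>M. \<forall>b\<in>M. \<forall>c\<in>M. \<forall>\<gamma>\<in>G. \<forall>\<mu>\<in>G. op (op a \<gamma> b) \<mu> c = op a \<gamma> (op b \<mu> c)"
    using ax by (elim conjE) assumption
  have refl: "\<forall>a\<in>M. le a a"
    using ax by (elim conjE) assumption
  have trans: "\<forall>a\<in>M. \<forall>b\<in>M. \<forall>c\<in>M. le a b \<and> le b c \<longrightarrow> le a c"
    using ax by (elim conjE) assumption
  have mono: "\<forall>a\<in>M. \<forall>b\<in>M. le a b \<longrightarrow>
      (\<forall>c\<in>M. \<forall>\<gamma>\<in>G. le (op a \<gamma> c) (op b \<gamma> c) \<and> le (op c \<gamma> a) (op c \<gamma> b))"
    using ax by (elim conjE) assumption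
  show ?thesis
    by unfold_locales (use closed assoc refl trans mono in blast)+
qed

context preordered_gamma_semigroup
begin

abbreviation gmul :: "'m set \<Rightarrow> 'm set \<Rightarrow> 'm set" (infixl "\<cdot>" 70)
  where "A \<cdot> B \<equiv> gprod op A G B"

abbreviation downset :: "'m set \<Rightarrow> 'm set" ("\<down>_" [90] 90)
  where "\<down>A \<equiv> down M le A"

lemma op_mono:
  assumes "a \<in> M" "b \<in> M" "c \<in> M" "d \<in> M" "\<gamma> \<in> G" "le a b" "le c d"
  shows "le (op a \<gamma> c) (op b \<gamma> d)"
  using assms op_mono_left op_mono_right by (meson op_closed trans_le)

lemma gprod_subset: "A \<subseteq> M \<Longrightarrow> B \<subseteq> M \<Longrightarrow> A \<cdot> B \<subseteq> M"
  unfolding gprod_def using op_closed by blast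

lemma gprod_assoc:
  assumes "A \<subseteq> M" "B \<subseteq> M" "C \<subseteq> M"
  shows "A \<cdot> B \<cdot> C = A \<cdot> (B \<cdot> C)"
proof -
  have "op (op a \<gamma> b) \<mu> c = op a \<gamma> (op b \<mu> c)"
    if "a \<in> A" "b \<in> B" "c \<in> C" "\<gamma> \<in> G" "\<mu> \<in> G" for a b c \<gamma> \<mu>
    using that assms by (blast intro: op_assoc)
  then show ?thesis
    unfolding gprod_def by (auto; metis)
qed

lemma down_subset: "\<down>A \<subseteq> M"
  unfolding down_def by blast

lemma down_down: "A \<subseteq> M \<Longrightarrow> \<down>\<down>A = \<down>A"
  unfolding down_def by (auto intro: trans_le refl_le)

lemma down_carrier: "\<down>M = M"
  unfolding down_def by (auto intro: refl_le)

lemma gprod_down: "A \<subseteq> M \<Longrightarrow> B \<subseteq> M \<Longrightarrow> \<down>A \<cdot> \<down>B \<subseteq> \<down>(A \<cdot> B)"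
proof
  fix x assume "x \<in> \<down>A \<cdot> \<down>B" "A \<subseteq> M" "B \<subseteq> M"
  then obtain a' b' a b \<gamma> where "x = op a' \<gamma> b'" "\<gamma> \<in> G" "a' \<in> M" "b' \<in> M"
    "a \<in> A" "b \<in> B" "le a' a" "le b' b"
    unfolding down_def gprod_def by blast
  moreover from this have "le x (op a \<gamma> b)"
    using \<open>A \<subseteq> M\<close> \<open>B \<subseteq> M\<close> by (auto intro: op_mono)
  ultimately show "x \<in> \<down>(A \<cdot> B)"
    unfolding down_def gprod_def by auto
qed

lemma gprod_down_carrier:
  assumes "A \<subseteq> M" "B \<subseteq> M"
  shows "\<down>A \<cdot> M \<cdot> \<down>B \<subseteq> \<down>(A \<cdot> M \<cdot> B)"
proof -
  have "\<down>A \<cdot> M \<cdot> \<down>B \<subseteq> \<down>(A \<cdot> M) \<cdot> \<down>B"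
    using gprod_down[OF assms(1), of M] by (simp add: down_carrier gprod_mono)
  also have "\<dots> \<subseteq> \<down>(A \<cdot> M \<cdot> B)"
    using assms by (simp add: gprod_down gprod_subset)
  finally show ?thesis .
qed

lemma bi_ideal_down: "bi_ideal M G op le B \<Longrightarrow> \<down>B = B"
  unfolding bi_ideal_def down_def by (auto intro: refl_le)

lemma bi_idealI:
  "\<lbrakk>B \<subseteq> M; B \<noteq> {}; B \<cdot> M \<cdot> B \<subseteq> B; \<down>B \<subseteq> B\<rbrakk> \<Longrightarrow> bi_ideal M G op le B"
  unfolding bi_ideal_def down_def by blast

lemma regularE:
  assumes "regular_pogs M G op le" "a \<in> M"
  obtains \<alpha> \<beta> x where "\<alpha> \<in> G" "\<beta> \<in> G" "x \<in> M" "le a (op (op a \<alpha> x) \<beta> a)"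
  using assms unfolding regular_pogs_def down_def gprod_def by blast

lemma left_regularE:
  assumes "left_regular_pogs M G op le" "a \<in> M"
  obtains \<alpha> \<beta> x where "\<alpha> \<in> G" "\<beta> \<in> G" "x \<in> M" "le a (op (op x \<alpha> a) \<beta> a)"
  using assms unfolding left_regular_pogs_def down_def gprod_def by blast

lemma right_regularE:
  assumes "right_regular_pogs M G op le" "a \<in> M"
  obtains \<alpha> \<beta> x where "\<alpha> \<in> G" "\<beta> \<in> G" "x \<in> M" "le a (op (op a \<alpha> a) \<beta> x)"
  using assms unfolding right_regular_pogs_def down_def gprod_def by blast

lemma bi_ideal_subset: "bi_ideal M G op le B \<Longrightarrow> B \<subseteq> M"
  unfolding bi_ideal_def by blast

lemma bi_ideal_sandwich:
  "\<lbrakk>bi_ideal M G op le B; b \<in> B; x \<in> M; c \<in> B; \<gamma> \<in> G; \<mu> \<in> G\<rbrakk> \<Longrightarrow> op (op b \<gamma> x) \<mu> c \<in> B"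
  unfolding bi_ideal_def gprod_def by blast

lemma bi_ideal_downward_closed: "\<lbrakk>bi_ideal M G op le B; b \<in> B; x \<in> M; le x b\<rbrakk> \<Longrightarrow> x \<in> B"
  unfolding bi_ideal_def by blast

lemma right_regular_bi_ideal_gprod_closed:
  assumes rr: "right_regular_pogs M G op le" and B: "bi_ideal M G op le B"
  shows "B \<cdot> B \<subseteq> B"
proof
  fix t assume "t \<in> B \<cdot> B"
  then obtain b \<gamma> c where t: "t = op b \<gamma> c" "b \<in> B" "\<gamma> \<in> G" "c \<in> B"
    unfolding gprod_def by blast
  have bc: "b \<in> M" "c \<in> M"
    using B t bi_ideal_subset by blast+
  obtain \<alpha> \<beta> x where x: "\<alpha> \<in> G" "\<beta> \<in> G" "x \<in> M" "le b (op (op b \<alpha> b) \<beta> x)"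
    using rr bc right_regularE by blast
  define d where "d = op (op b \<alpha> (op b \<beta> x)) \<gamma> c"
  have "le t (op (op (op b \<alpha> b) \<beta> x) \<gamma> c)"
    using t bc x by (simp add: op_mono_left)
  also have "op (op (op b \<alpha> b) \<beta> x) \<gamma> c = d"
    unfolding d_def using bc x by (simp add: op_assoc)
  finally have "le t d" .
  moreover have "d \<in> B"
    unfolding d_def using B t bc x by (simp add: bi_ideal_sandwich)
  ultimately show "t \<in> B"
    using B t bc by (simp add: bi_ideal_downward_closed)
qed

lemma regular_left_regular_bi_ideal_subset:
  assumes reg: "regular_pogs M G op le" and lreg: "left_regular_pogs M G op le"
    and B: "bi_ideal M G op le B"
  shows "B \<subseteq> \<down>(B \<cdot> B)"
proof
  fix b assume b: "b \<in> B"
  then have bM: "b \<in> M"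
    using B bi_ideal_subset by blast
  obtain \<alpha> \<beta> x where x: "\<alpha> \<in> G" "\<beta> \<in> G" "x \<in> M" "le b (op (op b \<alpha> x) \<beta> b)"
    using reg bM regularE by blast
  obtain \<epsilon> \<mu> y where y: "\<epsilon> \<in> G" "\<mu> \<in> G" "y \<in> M" "le b (op (op y \<epsilon> b) \<mu> b)"
    using lreg bM left_regularE by blast
  define c where "c = op (op b \<alpha> (op x \<beta> y)) \<epsilon> b"
  have "le (op (op b \<alpha> x) \<beta> b) (op (op b \<alpha> x) \<beta> (op (op y \<epsilon> b) \<mu> b))"
    using bM x y by (simp add: op_mono_right)
  also have "op (op b \<alpha> x) \<beta> (op (op y \<epsilon> b) \<mu> b) = op c \<mu> b"
    unfolding c_def using bM x y by (simp add: op_assoc)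
  finally have "le b (op c \<mu> b)"
    using trans_le[OF bM _ _ x(4)] bM x y unfolding c_def by simp
  moreover have "c \<in> B"
    unfolding c_def using B b x y by (simp add: bi_ideal_sandwich)
  then have "op c \<mu> b \<in> B \<cdot> B"
    unfolding gprod_def using b y by blast
  ultimately show "b \<in> \<down>(B \<cdot> B)"
    unfolding down_def using bM by blast
qed

theorem completely_regular_bi_ideal_eq:
  assumes cr: "completely_regular_pogs M G op le" and B: "bi_ideal M G op le B"
  shows "B = \<down>(B \<cdot> B)"
proof
  have "B \<cdot> B \<subseteq> B"
    using cr B right_regular_bi_ideal_gprod_closed unfolding completely_regular_pogs_def by blast
  then have "\<down>(B \<cdot> B) \<subseteq> \<down>B"
    by (rule down_mono)
  then show "\<down>(B \<cdot> B) \<subseteq> B"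
    using bi_ideal_down[OF B] by simp
  show "B \<subseteq> \<down>(B \<cdot> B)"
    using cr B regular_left_regular_bi_ideal_subset unfolding completely_regular_pogs_def by blast
qed

definition principal_bi_ideal :: "'m \<Rightarrow> 'm set" where
  "principal_bi_ideal a = \<down>({a} \<union> {a} \<cdot> M \<cdot> {a})"

lemma sandwich_subset: "a \<in> M \<Longrightarrow> {a} \<union> {a} \<cdot> M \<cdot> {a} \<subseteq> M"
  using gprod_subset[of "{a}" M] gprod_subset[of "{a} \<cdot> M" "{a}"] by blast

lemma sandwich_gprod_subset:
  assumes a: "a \<in> M"
  defines "S \<equiv> {a} \<union> {a} \<cdot> M \<cdot> {a}"
  shows "S \<cdot> M \<cdot> S \<subseteq> {a} \<cdot> M \<cdot> {a}"
proof -
  have aM: "{a} \<subseteq> M" and aMa: "{a} \<cdot> M \<subseteq> M" "M \<cdot> {a} \<subseteq> M"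
    using a by (simp_all add: gprod_subset)
  have SM: "S \<subseteq> M"
    unfolding S_def using a by (rule sandwich_subset)
  have "{a} \<cdot> M \<cdot> {a} \<cdot> M = {a} \<cdot> (M \<cdot> ({a} \<cdot> M))"
    using aM aMa by (simp add: gprod_assoc)
  also have "\<dots> \<subseteq> {a} \<cdot> M"
    using aMa by (simp add: gprod_mono gprod_subset)
  finally have SM_aM: "S \<cdot> M \<subseteq> {a} \<cdot> M"
    unfolding S_def gprod_Un_left by blast
  have "M \<cdot> ({a} \<cdot> M \<cdot> {a}) = M \<cdot> ({a} \<cdot> M) \<cdot> {a}"
    using aM aMa by (simp add: gprod_assoc)
  also have "\<dots> \<subseteq> M \<cdot> {a}"
    using aMa by (simp add: gprod_mono gprod_subset)
  finally have MS_Ma: "M \<cdot> S \<subseteq> M \<cdot> {a}"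
    unfolding S_def gprod_Un_right by blast
  have "S \<cdot> M \<cdot> S \<subseteq> {a} \<cdot> M \<cdot> S"
    using SM_aM by (simp add: gprod_mono)
  also have "\<dots> = {a} \<cdot> (M \<cdot> S)"
    using aM SM by (simp add: gprod_assoc)
  also have "\<dots> \<subseteq> {a} \<cdot> (M \<cdot> {a})"
    using MS_Ma by (simp add: gprod_mono)
  also have "\<dots> = {a} \<cdot> M \<cdot> {a}"
    using aM by (simp add: gprod_assoc)
  finally show ?thesis .
qed

lemma principal_bi_ideal_sandwich:
  assumes a: "a \<in> M"
  shows "principal_bi_ideal a \<cdot> M \<cdot> principal_bi_ideal a \<subseteq> \<down>({a} \<cdot> M \<cdot> {a})"
proof -
  let ?S = "{a} \<union> {a} \<cdot> M \<cdot> {a}"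
  have S: "?S \<subseteq> M"
    using a by (rule sandwich_subset)
  have "principal_bi_ideal a \<cdot> M \<cdot> principal_bi_ideal a \<subseteq> \<down>(?S \<cdot> M \<cdot> ?S)"
    unfolding principal_bi_ideal_def by (rule gprod_down_carrier[OF S S])
  also have "\<dots> \<subseteq> \<down>({a} \<cdot> M \<cdot> {a})"
    using a by (intro down_mono sandwich_gprod_subset)
  finally show ?thesis .
qed

lemma mem_principal_bi_ideal: "a \<in> M \<Longrightarrow> a \<in> principal_bi_ideal a"
  unfolding principal_bi_ideal_def down_def by (auto intro: refl_le)

lemma bi_ideal_principal_bi_ideal:
  assumes a: "a \<in> M"
  shows "bi_ideal M G op le (principal_bi_ideal a)"
proof (rule bi_idealI)
  show "principal_bi_ideal a \<subseteq> M"
    unfolding principal_bi_ideal_def by (rule down_subset)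
  show "principal_bi_ideal a \<noteq> {}"
    using mem_principal_bi_ideal[OF a] by blast
  have "\<down>({a} \<cdot> M \<cdot> {a}) \<subseteq> principal_bi_ideal a"
    unfolding principal_bi_ideal_def by (rule down_mono) blast
  with principal_bi_ideal_sandwich[OF a]
  show "principal_bi_ideal a \<cdot> M \<cdot> principal_bi_ideal a \<subseteq> principal_bi_ideal a"
    by (rule order_trans)
  show "\<down>(principal_bi_ideal a) \<subseteq> principal_bi_ideal a"
    unfolding principal_bi_ideal_def using sandwich_subset[OF a] by (simp add: down_down)
qed

lemma subset_down_sandwich_if_eq_down_gprod:
  assumes BM: "B \<subseteq> M" and B: "B = \<down>(B \<cdot> B)"
  shows "B \<subseteq> \<down>(B \<cdot> M \<cdot> B)"
proof -
  have BB: "B \<cdot> B \<subseteq> M"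
    by (rule gprod_subset[OF BM BM])
  have "B \<cdot> B \<subseteq> \<down>(B \<cdot> B \<cdot> (B \<cdot> B))"
    using gprod_down[OF BB BB] B by simp
  then have "\<down>(B \<cdot> B) \<subseteq> \<down>\<down>(B \<cdot> B \<cdot> (B \<cdot> B))"
    by (rule down_mono)
  also have "\<dots> = \<down>(B \<cdot> B \<cdot> (B \<cdot> B))"
    using BB by (simp add: down_down gprod_subset)
  also have "B \<cdot> B \<cdot> (B \<cdot> B) = B \<cdot> (B \<cdot> B) \<cdot> B"
    using BM BB by (simp add: gprod_assoc)
  also have "\<dots> \<subseteq> B \<cdot> M \<cdot> B"
    using BB by (simp add: gprod_mono)
  finally show ?thesis
    using B down_mono by blast
qed

theorem regular_if_bi_ideals_eq_down_gprod:
  assumes idem: "\<And>B. bi_ideal M G op le B \<Longrightarrow> B = \<down>(B \<cdot> B)"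
  shows "regular_pogs M G op le"
  unfolding regular_pogs_def
proof
  fix a assume a: "a \<in> M"
  let ?P = "principal_bi_ideal a"
  have P: "bi_ideal M G op le ?P"
    using a by (rule bi_ideal_principal_bi_ideal)
  have "?P \<subseteq> \<down>(?P \<cdot> M \<cdot> ?P)"
    using bi_ideal_subset[OF P] idem[OF P] by (rule subset_down_sandwich_if_eq_down_gprod)
  also have "\<dots> \<subseteq> \<down>\<down>({a} \<cdot> M \<cdot> {a})"
    using principal_bi_ideal_sandwich[OF a] by (rule down_mono)
  also have "\<dots> = \<down>({a} \<cdot> M \<cdot> {a})"
    using sandwich_subset[OF a] by (simp add: down_down)
  finally show "a \<in> \<down>({a} \<cdot> M \<cdot> {a})"
    using mem_principal_bi_ideal[OF a] by blast
qed

end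

theorem proposition6:
  fixes M :: "'m set" and G :: "'g set" and op :: "'m \<Rightarrow> 'g \<Rightarrow> 'm \<Rightarrow> 'm"
    and le :: "'m \<Rightarrow> 'm \<Rightarrow> bool"
  assumes "po_gamma_semigroup M G op le"
  shows "(completely_regular_pogs M G op le \<longrightarrow>
           (\<forall>B. bi_ideal M G op le B \<longrightarrow> B = down M le (gprod op B G B)))
       \<and> ((\<forall>B. bi_ideal M G op le B \<longrightarrow> B = down M le (gprod op B G B))
           \<longrightarrow> regular_pogs M G op le)"
proof -
  interpret preordered_gamma_semigroup M G op le
    using assms by (rule preordered_gamma_semigroup_if_po_gamma_semigroup)
  show ?thesis
    using completely_regular_bi_ideal_eq regular_if_bi_ideals_eq_down_gprod by blast
qed

end
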